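(* Let $\phi_T(t)=\frac{\tanh t}{t}$ (the hyperbolic-tangent characteristic function), whose Khintchine pair is $[0,m_T]$ with $m_T(dx)=\frac12\frac{|x|}{1+x^2}\frac{e^{-\pi|x|/4}}{\cosh(\pi|x|/4)}dx$. Its free analogue $\tilde\phi_T$ has Voiculescu transform $$V_{\tilde\phi_T}(it)=it\big[\ln(t/2)-\beta(t/2)-\psi(t/2)\big]=it\big[\ln(t/4)-\psi(t/4+1/2)\big],\qquad t>0.$$ Consequently, $2\psi(2s)-\psi(s)-\psi(s+1/2)=2\ln2$ for all $s>0$.
   Context: $\psi=\Gamma'/\Gamma$ is the digamma function and $\beta(x):=\sum_{k=0}^\infty\frac{(-1)^k}{x+k}=\frac12[\psi(\frac{x+1}{2})-\psi(\frac x2)]$ for $x>0$. For an infinitely divisible characteristic function $\phi$ with Khintchine exponent $\log\phi$ (continuous logarithm, $\log\phi(0)=0$), its free analogue $\tilde\phi$ is the $\boxplus$-infinitely divisible probability measure whose Voiculescu transform satisfies $V_{\tilde\phi}(it)=it^2\int_0^\infty\overline{\log\phi(s)}e^{-ts}ds$, $t>0$; if $\phi$ has Khintchine pair $[0,m]$ with $m$ symmetric, this equals $-it\int_{\mathbb{R}}\frac{1+x^2}{t^2+x^2}m(dx)$. *)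

theory Defs
  imports "HOL-Analysis.Analysis"
begin

definition phiT :: "real \<Rightarrow> real" where
  "phiT t = (if t = 0 then 1 else tanh t / t)"

definition betaF :: "real \<Rightarrow> real" where
  "betaF x = (\<Sum>k. (-1) ^ k / (x + real k))"

text \<open>Voiculescu transform of the free analogue of a characteristic function with
  Khintchine exponent L, evaluated at the point i t:
  V(i t) = i t^2 * integral_0^infinity conj(L s) e^(-t s) ds.\<close>
definition V_free :: "(real \<Rightarrow> complex) \<Rightarrow> real \<Rightarrow> complex" where
  "V_free L t = \<i> * complex_of_real (t ^ 2) *
     (LINT s:{0<..}|lborel. cnj (L s) * complex_of_real (exp (- (t * s))))"

end

(*
  The exponent L is forced to be ln phi_T: Im L / (2 pi) is a continuous integer-valued function
  vanishing at 0. Write ln phi_T s = ln (tanh s) - ln s. The Laplace transform of ln s is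
  -(gamma + ln t) / t, i.e. the derivative of the Gamma integral at 1. With q = exp (-2 s),
  -ln (tanh s) = sum_n (q^n - (-q)^n) / n has nonnegative terms, so it can be integrated termwise;
  only odd n contribute, and they sum to (psi (t/4 + 1/2) - psi (1/2)) / t. The form involving beta
  follows from beta x = (psi ((x+1)/2) - psi (x/2)) / 2 and the duplication formula for psi, which
  comes from splitting the partial sums in the limit formula for psi (2 s) into even and odd terms.
*)

theory Submission
  imports Defs "HOL-Probability.Sinc_Integral"
begin

lemma sums_inverse_diff_Digamma:
  fixes a b :: real assumes "a > 0" "b > 0"
  shows "(\<lambda>k. inverse (a + real k) - inverse (b + real k)) sums (Digamma b - Digamma a)"
proof -
  have "(\<lambda>k. inverse (real (Suc k)) - inverse (z + real k)) sums (Digamma z + euler_mascheroni)"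
    if "z > 0" for z :: real
    using summable_Digamma[of z] that by (simp add: Digamma_def summable_sums)
  from sums_diff[OF this[of b] this[of a]] assms show ?thesis by simp
qed

lemma Digamma_duplication_real:
  fixes s :: real assumes s: "s > 0"
  shows "2 * Digamma (2 * s) - Digamma s - Digamma (s + 1/2) = 2 * ln 2"
proof -
  define Psi where "Psi z m = ln (real m) - (\<Sum>n<m. inverse (z + real n))" for z :: real and m :: nat
  have Psi_lim: "Psi z \<longlonglongrightarrow> Digamma z" if "z > 0" for z
    using Digamma_LIMSEQ[of z] that unfolding Psi_def by simp
  have "(\<lambda>m. Psi (2 * s) (2 * m)) \<longlonglongrightarrow> Digamma (2 * s)"
    using LIMSEQ_subseq_LIMSEQ[OF Psi_lim[of "2 * s"], of "\<lambda>m. 2*m"] s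
    by (simp add: strict_mono_def o_def)
  then have lim: "(\<lambda>m. 2 * Psi (2 * s) (2 * m) - Psi s m - Psi (s + 1/2) m)
                  \<longlonglongrightarrow> 2 * Digamma (2 * s) - Digamma s - Digamma (s + 1/2)"
    using s by (intro tendsto_intros Psi_lim) auto
  have "2 * Psi (2 * s) (2 * m) - Psi s m - Psi (s + 1/2) m = 2 * ln 2" if "m > 0" for m
  proof -
    have split: "(\<Sum>n<2*m. f n) = (\<Sum>k<m. f (2*k)) + (\<Sum>k<m. f (2*k+1))" for f :: "nat \<Rightarrow> real"
      using sum_split_even_odd[where f = f and g = f and n = m] by simp
    have halves: "inverse (2 * s + real (2*k)) = inverse (s + real k) / 2"
      "inverse (2 * s + real (2*k+1)) = inverse (s + 1/2 + real k) / 2" for k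
      using s by (simp_all add: field_simps)
    have "(\<Sum>n<2*m. inverse (2 * s + real n))
            = (\<Sum>k<m. inverse (s + real k)) / 2 + (\<Sum>k<m. inverse (s + 1/2 + real k)) / 2"
      by (simp only: split halves sum_divide_distrib)
    moreover have "ln (real (2*m)) = ln 2 + ln (real m)"
      using that by (simp add: ln_mult)
    ultimately show ?thesis by (simp add: Psi_def)
  qed
  then have "(\<lambda>m. 2 * Psi (2 * s) (2 * m) - Psi s m - Psi (s + 1/2) m) \<longlonglongrightarrow> 2 * ln 2"
    by (intro tendsto_eventually eventually_mono[OF eventually_gt_at_top[of 0]])
  from LIMSEQ_unique[OF lim this] show ?thesis .
qed

lemma betaF_eq_Digamma:
  fixes x :: real assumes x: "x > 0"
  shows "betaF x = (Digamma ((x + 1) / 2) - Digamma (x / 2)) / 2"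
proof -
  let ?a = "\<lambda>k. inverse (x + real k)"
  have "summable (\<lambda>k. (-1)^k * ?a k)"
  proof (rule summable_Leibniz'(1))
    show "?a \<longlonglongrightarrow> 0"
      by (intro tendsto_inverse_0_at_top filterlim_tendsto_add_at_top[OF tendsto_const]
            filterlim_real_sequentially)
  qed (use x in \<open>auto intro: le_imp_inverse_le\<close>)
  then have "(\<lambda>k. (-1)^k * ?a k) sums betaF x"
    by (simp add: betaF_def summable_sums divide_inverse)
  moreover have "(-1::real) ^ (n + n) = 1" for n
    by (simp flip: mult_2)
  ultimately have "(\<lambda>n. ?a (2*n) - ?a (2*n+1)) sums betaF x"
    using sums_group[of "\<lambda>k. (-1)^k * ?a k" _ 2] by (simp add: numeral_2_eq_2)
  moreover have "?a (2*n) - ?a (2*n+1) = (inverse (x/2 + real n) - inverse ((x+1)/2 + real n)) / 2" for n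
  proof -
    have "x + real (2*n) = 2 * (x/2 + real n)" "x + real (2*n+1) = 2 * ((x+1)/2 + real n)"
      by simp_all
    then show ?thesis
      by (simp add: field_simps)
  qed
  ultimately have "(\<lambda>n. (inverse (x/2 + real n) - inverse ((x+1)/2 + real n)) / 2) sums betaF x"
    by (simp only:)
  moreover have "(\<lambda>n. (inverse (x/2 + real n) - inverse ((x+1)/2 + real n)) / 2)
                   sums ((Digamma ((x+1)/2) - Digamma (x/2)) / 2)"
    using x by (intro sums_divide sums_inverse_diff_Digamma) auto
  ultimately show ?thesis
    by (rule sums_unique2)
qed

lemma ln_minus_betaF_minus_Digamma:
  fixes x :: real assumes x: "x > 0"
  shows "ln x - betaF x - Digamma x = ln (x/2) - Digamma (x/2 + 1/2)"
proof -
  have "ln x = ln (x/2) + ln 2"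
    using x by (simp add: ln_div)
  moreover have "betaF x = (Digamma (x/2 + 1/2) - Digamma (x/2)) / 2"
    using betaF_eq_Digamma[OF x] by (simp add: add_divide_distrib)
  moreover have "2 * Digamma x - Digamma (x/2) - Digamma (x/2 + 1/2) = 2 * ln 2"
    using Digamma_duplication_real[of "x/2"] x by simp
  ultimately show ?thesis
    by (simp add: field_simps)
qed

lemma continuous_log_eq_ln:
  fixes L :: "'a::topological_space \<Rightarrow> complex" and g :: "'a \<Rightarrow> real"
  assumes S: "connected S" and L_cont: "continuous_on S L"
    and a: "a \<in> S" "Im (L a) = 0"
    and exp_L: "\<And>x. x \<in> S \<Longrightarrow> exp (L x) = complex_of_real (g x)"
    and g_pos: "\<And>x. x \<in> S \<Longrightarrow> g x > 0"
    and x: "x \<in> S"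
  shows "L x = complex_of_real (ln (g x))"
proof -
  define k where "k y = Im (L y) / (2 * pi)" for y
  have Re_L: "Re (L y) = ln (g y)" and k_Ints: "k y \<in> \<int>" if "y \<in> S" for y
  proof -
    have "exp (L y - complex_of_real (ln (g y))) = 1"
      using exp_L[OF that] g_pos[OF that] by (simp add: exp_diff exp_of_real)
    then obtain n :: int where "Re (L y) = ln (g y)" "Im (L y) = of_int (2 * n) * pi"
      unfolding exp_eq_1 by auto
    then show "Re (L y) = ln (g y)" "k y \<in> \<int>"
      by (auto simp: k_def)
  qed
  have "k constant_on S"
  proof (rule continuous_discrete_range_constant[OF S])
    show "continuous_on S k"
      unfolding k_def by (intro continuous_intros continuous_on_compose2[OF continuous_on_Im L_cont]) auto
    show "\<exists>e>0. \<forall>z. z \<in> S \<and> k z \<noteq> k y \<longrightarrow> e \<le> norm (k z - k y)" if "y \<in> S" for y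
    proof (intro exI[of _ 1] conjI allI impI)
      fix z assume "z \<in> S \<and> k z \<noteq> k y"
      with k_Ints that obtain i j :: int where "k z = of_int i" "k y = of_int j" "i \<noteq> j"
        by (metis Ints_cases)
      then show "1 \<le> norm (k z - k y)"
        by (simp flip: of_int_diff)
    qed simp
  qed
  then have "k x = k a"
    using a x by (auto simp: constant_on_def)
  then show ?thesis
    using a x Re_L[OF x] by (simp add: k_def complex_eq_iff)
qed

lemma phiT_pos: "phiT t > 0"
  by (cases t "0::real" rule: linorder_cases) (auto simp: phiT_def divide_neg_neg)

lemma has_bochner_integral_suminf_nonneg:
  fixes f :: "nat \<Rightarrow> 'a \<Rightarrow> real"
  assumes int: "\<And>n. has_bochner_integral M (f n) (I n)"
    and nonneg: "\<And>n x. 0 \<le> f n x"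
    and sums: "\<And>x. (\<lambda>n. f n x) sums g x"
    and I_sums: "I sums S"
    and meas: "g \<in> borel_measurable M"
  shows "has_bochner_integral M g S"
proof -
  define F where "F N x = (\<Sum>n<N. f n x)" for N x
  have "has_bochner_integral M (F N) (\<Sum>n<N. I n)" for N
    unfolding F_def by (intro has_bochner_integral_sum int)
  then have F_int: "integrable M (F N)" and F_integral: "integral\<^sup>L M (F N) = (\<Sum>n<N. I n)" for N
    by (auto intro: integrable.intros has_bochner_integral_integral_eq)
  have "AE x in M. mono (\<lambda>N. F N x)"
    by (intro AE_I2 incseq_SucI) (simp add: F_def nonneg)
  moreover have "AE x in M. 0 \<le> F N x" for N
    by (intro AE_I2) (simp add: F_def nonneg sum_nonneg)
  moreover have "AE x in M. (\<lambda>N. F N x) \<longlonglongrightarrow> g x"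
    using sums by (simp add: F_def sums_def)
  moreover have "(\<lambda>N. integral\<^sup>L M (F N)) \<longlonglongrightarrow> S"
    using I_sums by (simp add: F_integral sums_def)
  ultimately show ?thesis
    using integral_monotone_convergence_nonneg[OF F_int _ _ _ _ meas]
    by (simp add: has_bochner_integral_iff)
qed

lemma has_bochner_integral_dominated_convergence:
  fixes s :: "nat \<Rightarrow> 'a \<Rightarrow> 'b::{banach, second_countable_topology}" and w :: "'a \<Rightarrow> real"
  assumes s: "\<And>n. has_bochner_integral M (s n) (I n)" and I: "I \<longlonglongrightarrow> J"
    and w: "integrable M w" and f: "f \<in> borel_measurable M"
    and bound: "\<And>n x. norm (s n x) \<le> w x" and lim: "\<And>x. (\<lambda>n. s n x) \<longlonglongrightarrow> f x"
  shows "has_bochner_integral M f J"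
proof -
  have s_meas: "s n \<in> borel_measurable M" for n
    using s[of n] by (auto dest: has_bochner_integral_integrable)
  have "integrable M f"
    by (rule integrable_dominated_convergence[where s = s, OF f s_meas w]) (use lim bound in auto)
  moreover have "(\<lambda>n. integral\<^sup>L M (s n)) \<longlonglongrightarrow> integral\<^sup>L M f"
    by (rule integral_dominated_convergence[where s = s, OF f s_meas w]) (use lim bound in auto)
  then have "integral\<^sup>L M f = J"
    using I has_bochner_integral_integral_eq[OF s] LIMSEQ_unique by auto
  ultimately show ?thesis
    by (simp add: has_bochner_integral_iff)
qed

lemma has_bochner_integral_Gamma_real:
  fixes x :: real assumes x: "x > 0"
  shows "has_bochner_integral lborel (\<lambda>y. indicator {0<..} y * (y powr (x - 1) / exp y)) (Gamma x)"
proof -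
  have "(\<lambda>y. if y \<in> {0..} then y powr (x - 1) / exp y else 0)
          = (\<lambda>y. indicator {0<..} y * (y powr (x - 1) / exp y))"
    by (auto simp: indicator_def fun_eq_iff)
  then have "((\<lambda>y. indicator {0<..} y * (y powr (x - 1) / exp y)) has_integral Gamma x) UNIV"
    using has_integral_restrict_UNIV[of "{0..}" "\<lambda>y. y powr (x - 1) / exp y" "Gamma x"]
      Gamma_integral_real[OF x] by simp
  then have "(\<integral>\<^sup>+y. ennreal (indicator {0<..} y * (y powr (x - 1) / exp y)) \<partial>lborel) = ennreal (Gamma x)"
    by (intro nn_integral_has_integral_lborel) (auto simp: indicator_def)
  then show ?thesis
    using x by (intro has_bochner_integral_nn_integral) (auto simp: indicator_def Gamma_real_pos less_imp_le)
qed

lemma has_bochner_integral_exp_scaled: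
  fixes u :: real assumes u: "u > 0"
  shows "has_bochner_integral lborel (\<lambda>y. indicator {0<..} y * exp (- (y * u))) (1 / u)"
  using integrable_I0i_exp_mscale[OF u] LBINT_I0i_exp_mscale[OF u]
  by (simp add: has_bochner_integral_iff set_integrable_def interval_lebesgue_integral_0_infty
        set_lebesgue_integral_def)

lemma powr_difference_quotient_bounds:
  fixes y h :: real assumes y: "y > 0" and h: "h > 0"
  shows "ln y \<le> (y powr h - 1) / h" "(y powr h - 1) / h \<le> ln y * y powr h"
proof -
  have p: "y powr h = exp (h * ln y)"
    using y by (simp add: powr_def)
  have "1 + h * ln y \<le> exp (h * ln y)"
    by (rule exp_ge_add_one_self)
  then show "ln y \<le> (y powr h - 1) / h"
    using h by (simp add: p field_simps)
  have "exp (h * ln y) * (1 - h * ln y) \<le> exp (h * ln y) * exp (- (h * ln y))"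
    using exp_ge_add_one_self[of "- (h * ln y)"] by (intro mult_left_mono) auto
  then show "(y powr h - 1) / h \<le> ln y * y powr h"
    using h by (simp add: p exp_minus field_simps)
qed

lemma abs_powr_difference_quotient_le:
  fixes y h :: real assumes y: "y > 0" and h: "0 < h" "h \<le> 1"
  shows "\<bar>(y powr h - 1) / h\<bar> \<le> 2 * y powr (-1/2) + y powr 2"
proof (cases "y \<le> 1")
  case True
  have "ln y * y powr h \<le> 0"
    using True y by (simp add: mult_nonpos_nonneg)
  then have "\<bar>(y powr h - 1) / h\<bar> \<le> - ln y"
    using powr_difference_quotient_bounds[OF y h(1)] by linarith
  also have "- ln y = 2 * ln (y powr (-1/2))"
    using y by (simp add: ln_powr)
  also have "\<dots> \<le> 2 * y powr (-1/2)"
    using y ln_le_minus_one[of "y powr (-1/2)"] by simp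
  finally show ?thesis
    using powr_ge_zero[of y 2] by linarith
next
  case False
  have "y powr h \<le> y"
    using powr_mono[of h 1 y] False h by simp
  then have "ln y * y powr h \<le> y * y"
    using False ln_le_minus_one[OF y] by (intro mult_mono) auto
  moreover have "0 \<le> ln y"
    using False by simp
  ultimately have "\<bar>(y powr h - 1) / h\<bar> \<le> y * y"
    using powr_difference_quotient_bounds[OF y h(1)] by (intro abs_leI) linarith+
  moreover have "y powr 2 = y * y"
    using y by (simp add: power2_eq_square)
  ultimately show ?thesis
    using powr_ge_zero[of y "-1/2"] by linarith
qed

lemma powr_difference_quotient_tendsto_ln:
  fixes y :: real assumes y: "y > 0"
  shows "((\<lambda>h. (y powr h - 1) / h) \<longlongrightarrow> ln y) (at_right 0)"
proof (rule real_tendsto_sandwich[OF _ _ tendsto_const])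
  show "\<forall>\<^sub>F h in at_right 0. ln y \<le> (y powr h - 1) / h"
    and "\<forall>\<^sub>F h in at_right 0. (y powr h - 1) / h \<le> ln y * y powr h"
    using eventually_at_right_less[of 0]
    by (auto elim: eventually_mono intro: powr_difference_quotient_bounds[OF y])
  have "((\<lambda>h. ln y * y powr h) \<longlongrightarrow> ln y * y powr 0) (at_right 0)"
    using y by (intro tendsto_intros) auto
  then show "((\<lambda>h. ln y * y powr h) \<longlongrightarrow> ln y) (at_right 0)"
    using y by simp
qed

lemma Gamma_difference_quotient_at_1:
  "((\<lambda>d. (Gamma (1 + d) - 1) / d) \<longlongrightarrow> - euler_mascheroni) (at (0::real))"
proof -
  have "(Gamma has_field_derivative Gamma 1 * Digamma 1) (at (1::real))"
    by (rule has_field_derivative_Gamma) (auto simp: nonpos_Ints_def)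
  then show ?thesis
    by (simp add: DERIV_def)
qed

lemma has_bochner_integral_powr_difference_quotient_exp:
  fixes h :: real assumes h: "h > 0"
  shows "has_bochner_integral lborel (\<lambda>y. indicator {0<..} y * ((y powr h - 1) / h * exp (- y)))
           ((Gamma (1 + h) - 1) / h)"
proof -
  have "has_bochner_integral lborel
          (\<lambda>y. (indicator {0<..} y * (y powr (1 + h - 1) / exp y)
                 - indicator {0<..} y * (y powr (1 - 1) / exp y)) / h)
          ((Gamma (1 + h) - Gamma 1) / h)"
    using h by (intro has_bochner_integral_divide_zero has_bochner_integral_diff
                      has_bochner_integral_Gamma_real) auto
  moreover have "(\<lambda>y. (indicator {0<..} y * (y powr (1 + h - 1) / exp y)
                    - indicator {0<..} y * (y powr (1 - 1) / exp y)) / h)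
                 = (\<lambda>y. indicator {0<..} y * ((y powr h - 1) / h * exp (- y)))"
    by (auto simp: fun_eq_iff indicator_def exp_minus field_simps)
  ultimately show ?thesis
    by simp
qed

text \<open>Differentiation of the Gamma integral at 1 under the integral sign, by dominated convergence.\<close>

lemma has_bochner_integral_ln_times_exp:
  "has_bochner_integral lborel (\<lambda>y::real. indicator {0<..} y * (ln y * exp (- y))) (- euler_mascheroni)"
proof -
  define h where "h n = inverse (real (Suc n))" for n
  have h: "0 < h n" "h n \<le> 1" for n
    by (auto simp: h_def field_simps)
  have h_at_right: "filterlim h (at_right 0) sequentially"
    using h(1) LIMSEQ_inverse_real_of_nat
    by (auto simp: filterlim_at h_def[abs_def] less_imp_neq[symmetric])
  define q where "q n y = indicator {0<..} y * ((y powr h n - 1) / h n * exp (- y))" for n and y :: real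
  define w where "w y = indicator {0<..} y * ((2 * y powr (-1/2) + y powr 2) * exp (- y))" for y :: real
  have q_integral: "has_bochner_integral lborel (q n) ((Gamma (1 + h n) - 1) / h n)" for n
    unfolding q_def[abs_def] using h(1) by (rule has_bochner_integral_powr_difference_quotient_exp)
  have "integrable lborel (\<lambda>y::real. 2 * (indicator {0<..} y * (y powr (1/2 - 1) / exp y))
                                      + indicator {0<..} y * (y powr (3 - 1) / exp y))"
    by (intro Bochner_Integration.integrable_add integrable_mult_right
          integrable.intros[OF has_bochner_integral_Gamma_real]) auto
  moreover have "(\<lambda>y::real. 2 * (indicator {0<..} y * (y powr (1/2 - 1) / exp y))
                            + indicator {0<..} y * (y powr (3 - 1) / exp y)) = w"
    by (auto simp: fun_eq_iff w_def indicator_def exp_minus field_simps)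
  ultimately have w_integrable: "integrable lborel w"
    by simp
  have q_bound: "norm (q n y) \<le> w y" for n y
  proof (cases "y > 0")
    case True
    then show ?thesis
      using mult_right_mono[OF abs_powr_difference_quotient_le[OF True h] exp_ge_zero]
      by (simp add: q_def w_def abs_mult)
  qed (simp add: q_def w_def)
  have q_lim: "(\<lambda>n. q n y) \<longlonglongrightarrow> indicator {0<..} y * (ln y * exp (- y))" for y
  proof (cases "y > 0")
    case True
    have "(\<lambda>n. (y powr h n - 1) / h n * exp (- y)) \<longlonglongrightarrow> ln y * exp (- y)"
      using filterlim_compose[OF powr_difference_quotient_tendsto_ln[OF True] h_at_right]
      by (intro tendsto_mult tendsto_const)
    then show ?thesis
      using True by (simp add: q_def)
  qed (simp add: q_def)
  have "(\<lambda>n. (Gamma (1 + h n) - 1) / h n) \<longlonglongrightarrow> - euler_mascheroni"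
    using filterlim_compose[OF tendsto_mono[OF at_le[OF subset_UNIV] Gamma_difference_quotient_at_1]
                            h_at_right] by simp
  then show ?thesis
    by (rule has_bochner_integral_dominated_convergence[where s = q, OF q_integral _ w_integrable _
          q_bound q_lim]) measurable
qed

lemma has_bochner_integral_ln_times_exp_scaled:
  fixes t :: real assumes t: "t > 0"
  shows "has_bochner_integral lborel (\<lambda>y. indicator {0<..} y * (ln y * exp (- (t * y))))
           (- (euler_mascheroni + ln t) / t)"
proof -
  define F where "F y = indicator {0<..} y * (ln y * exp (- (t * y)))" for y :: real
  have "F (y / t) = indicator {0<..} y * (ln y * exp (- y))
                    - ln t * (indicator {0<..} y * (y powr (1 - 1) / exp y))" for y
    using t by (cases "y > 0") (auto simp: F_def indicator_def ln_div exp_minus field_simps)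
  then have F_scaled: "has_bochner_integral lborel (\<lambda>y. F (0 + (1/t) * y)) (- euler_mascheroni - ln t)"
    using has_bochner_integral_diff[OF has_bochner_integral_ln_times_exp
            has_bochner_integral_mult_right[OF has_bochner_integral_Gamma_real[of 1], of "ln t"]]
    by simp
  have "integrable lborel F"
    using lborel_integrable_real_affine_iff[of "1/t" F 0] integrable.intros[OF F_scaled] t by simp
  moreover have "integral\<^sup>L lborel F = \<bar>1/t\<bar> *\<^sub>R integral\<^sup>L lborel (\<lambda>y. F (0 + (1/t) * y))"
    using t by (intro lborel_integral_real_affine) simp
  then have "integral\<^sup>L lborel F = - (euler_mascheroni + ln t) / t"
    using has_bochner_integral_integral_eq[OF F_scaled] t by (simp add: divide_simps)
  ultimately show ?thesis
    by (simp add: F_def[abs_def] has_bochner_integral_iff)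
qed

lemma sums_minus_ln_tanh:
  fixes y :: real assumes y: "y > 0"
  shows "(\<lambda>n. (exp (- (2 * y)) ^ n - (- exp (- (2 * y))) ^ n) / real n) sums (- ln (tanh y))"
proof -
  define q where "q = exp (- (2 * y))"
  have q: "0 < q" "q < 1"
    using y by (auto simp: q_def)
  have "(\<lambda>n. - ((- q) ^ n) / real n) sums ln (1 + q)"
    using q by (intro ln_series') auto
  moreover have "(\<lambda>n. - (q ^ n) / real n) sums ln (1 - q)"
    using ln_series'[of "- q"] q by simp
  ultimately have "(\<lambda>n. - ((- q) ^ n) / real n - - (q ^ n) / real n) sums (ln (1 + q) - ln (1 - q))"
    by (rule sums_diff)
  moreover have "tanh y = (1 - q) / (1 + q)"
    by (simp add: tanh_real_altdef q_def)
  then have "- ln (tanh y) = ln (1 + q) - ln (1 - q)"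
    using q by (simp add: ln_div)
  ultimately show ?thesis
    by (simp add: q_def[symmetric] diff_divide_distrib)
qed

lemma sums_odd_reciprocals_Digamma:
  fixes t :: real assumes t: "t > 0"
  shows "(\<lambda>n. (1 - (-1) ^ n) / real n * (1 / (t + 2 * real n)))
           sums ((Digamma (t/4 + 1/2) + euler_mascheroni + 2 * ln 2) / t)"
proof -
  define b where "b = (\<lambda>n. (1 - (-1) ^ n) / real n * (1 / (t + 2 * real n)))"
  have "b (2*k+1) = (inverse (1/2 + real k) - inverse ((t/4 + 1/2) + real k)) / t" for k
  proof -
    have "inverse (1/2 + real k) - inverse ((t/4 + 1/2) + real k)
            = 2 / (2 * real k + 1) - 4 / (t + 4 * real k + 2)"
      using t by (simp add: field_simps)
    also have "\<dots> = 2 * t / ((2 * real k + 1) * (t + 4 * real k + 2))"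
      using t by (simp add: field_simps)
    finally have "(inverse (1/2 + real k) - inverse ((t/4 + 1/2) + real k)) / t
                    = 2 / ((2 * real k + 1) * (t + 4 * real k + 2))"
      using t by simp
    then show ?thesis
      by (simp add: b_def field_simps)
  qed
  moreover have "(\<lambda>k. (inverse (1/2 + real k) - inverse ((t/4 + 1/2) + real k)) / t)
                   sums ((Digamma (t/4 + 1/2) - Digamma (1/2)) / t)"
    using t by (intro sums_divide sums_inverse_diff_Digamma) auto
  ultimately have "(\<lambda>k. b (2*k+1)) sums ((Digamma (t/4 + 1/2) + euler_mascheroni + 2 * ln 2) / t)"
    by (simp add: Digamma_one_half algebra_simps)
  moreover have "b n = 0" if "n \<notin> range (\<lambda>k. 2*k+1)" for n
  proof -
    have "even n"
      using that by (metis oddE rangeI)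
    then show ?thesis
      by (simp add: b_def)
  qed
  ultimately have "b sums ((Digamma (t/4 + 1/2) + euler_mascheroni + 2 * ln 2) / t)"
    using sums_mono_reindex[of "\<lambda>k. 2*k+1" b] by (simp add: strict_mono_def)
  then show ?thesis
    by (simp only: b_def)
qed

lemma has_bochner_integral_minus_ln_tanh_times_exp:
  fixes t :: real assumes t: "t > 0"
  shows "has_bochner_integral lborel (\<lambda>y. indicator {0<..} y * (- ln (tanh y) * exp (- (t * y))))
           ((Digamma (t/4 + 1/2) + euler_mascheroni + 2 * ln 2) / t)"
proof -
  define c where "c n y = (exp (- (2 * y)) ^ n - (- exp (- (2 * y))) ^ n) / real n" for n and y :: real
  define f where "f n y = indicator {0<..} y * (c n y * exp (- (t * y)))" for n y
  have c_nonneg: "0 \<le> c n y" for n y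
    using abs_ge_self[of "(- exp (- (2 * y))) ^ n"] by (simp add: c_def power_abs)
  have f_eq: "f n y = (1 - (-1) ^ n) / real n * (indicator {0<..} y * exp (- (y * (t + 2 * real n))))"
    for n y
  proof -
    have "exp (- (2 * y)) ^ n * exp (- (t * y)) = exp (- (y * (t + 2 * real n)))"
      by (simp add: exp_of_nat_mult[symmetric] exp_add[symmetric] algebra_simps)
    moreover have "c n y * exp (- (t * y))
                     = (1 - (-1) ^ n) / real n * (exp (- (2 * y)) ^ n * exp (- (t * y)))"
      unfolding c_def power_minus[of "exp (- (2 * y))" n] by (simp add: divide_inverse algebra_simps)
    ultimately show ?thesis
      by (simp add: f_def)
  qed
  have f_integral: "has_bochner_integral lborel (f n) ((1 - (-1) ^ n) / real n * (1 / (t + 2 * real n)))"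
    for n
    unfolding f_eq[abs_def] using t by (intro has_bochner_integral_mult_right has_bochner_integral_exp_scaled) simp
  have f_nonneg: "0 \<le> f n y" for n y
    by (simp add: f_def c_nonneg)
  have f_sums: "(\<lambda>n. f n y) sums (indicator {0<..} y * (- ln (tanh y) * exp (- (t * y))))" for y
    using sums_mult2[OF sums_minus_ln_tanh, of y "exp (- (t * y))"]
    by (cases "y > 0") (simp_all add: f_def c_def)
  have "(tanh :: real \<Rightarrow> real) \<in> borel_measurable borel"
    by (intro borel_measurable_continuous_onI continuous_intros) auto
  then have "(\<lambda>y. indicator {0<..} y * (- ln (tanh y) * exp (- (t * y)))) \<in> borel_measurable lborel"
    by measurable
  from has_bochner_integral_suminf_nonneg[OF f_integral f_nonneg f_sums
         sums_odd_reciprocals_Digamma[OF t] this]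
  show ?thesis .
qed

lemma has_bochner_integral_ln_phiT_times_exp:
  fixes t :: real assumes t: "t > 0"
  shows "has_bochner_integral lborel (\<lambda>y. indicator {0<..} y * (ln (phiT y) * exp (- (t * y))))
           ((ln (t/4) - Digamma (t/4 + 1/2)) / t)"
proof -
  have "ln (phiT y) = - (- ln (tanh y)) - ln y" if "y > 0" for y
    using that by (simp add: phiT_def ln_div)
  then have integrand: "(\<lambda>y. - (indicator {0<..} y * (- ln (tanh y) * exp (- (t * y))))
                             - indicator {0<..} y * (ln y * exp (- (t * y))))
                      = (\<lambda>y. indicator {0<..} y * (ln (phiT y) * exp (- (t * y))))"
    by (auto simp: fun_eq_iff indicator_def left_diff_distrib)
  have "ln t = ln (t/4) + 2 * ln 2"
    using t ln_realpow[of 2 2] by (simp add: ln_div)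
  then have integral_value: "- ((Digamma (t/4 + 1/2) + euler_mascheroni + 2 * ln 2) / t)
                      - (- (euler_mascheroni + ln t) / t)
                    = (ln (t/4) - Digamma (t/4 + 1/2)) / t"
    by (simp add: diff_divide_distrib add_divide_distrib)
  have "has_bochner_integral lborel
          (\<lambda>y. - (indicator {0<..} y * (- ln (tanh y) * exp (- (t * y))))
               - indicator {0<..} y * (ln y * exp (- (t * y))))
          (- ((Digamma (t/4 + 1/2) + euler_mascheroni + 2 * ln 2) / t)
           - (- (euler_mascheroni + ln t) / t))"
    by (intro has_bochner_integral_diff has_bochner_integral_minus t
          has_bochner_integral_minus_ln_tanh_times_exp has_bochner_integral_ln_times_exp_scaled)
  then show ?thesis
    unfolding integrand integral_value .
qed

lemma V_free_real_exponent:
  fixes l :: "real \<Rightarrow> real"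
  assumes "has_bochner_integral lborel (\<lambda>s. indicator {0<..} s * (l s * exp (- (t * s)))) v"
  shows "set_integrable lborel {0<..} (\<lambda>s. cnj (complex_of_real (l s)) * complex_of_real (exp (- (t * s))))"
    and "V_free (\<lambda>s. complex_of_real (l s)) t = \<i> * complex_of_real (t ^ 2 * v)"
proof -
  have "(\<lambda>s. indicator {0<..} s *\<^sub>R (cnj (complex_of_real (l s)) * complex_of_real (exp (- (t * s)))))
        = (\<lambda>s. complex_of_real (indicator {0<..} s * (l s * exp (- (t * s)))))"
    by (auto simp: fun_eq_iff indicator_def)
  then have "has_bochner_integral lborel
          (\<lambda>s. indicator {0<..} s *\<^sub>R (cnj (complex_of_real (l s)) * complex_of_real (exp (- (t * s)))))
          (complex_of_real v)"
    using has_bochner_integral_of_real[OF assms] by (simp only:)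
  then show "set_integrable lborel {0<..} (\<lambda>s. cnj (complex_of_real (l s)) * complex_of_real (exp (- (t * s))))"
    and "V_free (\<lambda>s. complex_of_real (l s)) t = \<i> * complex_of_real (t ^ 2 * v)"
    by (auto simp: set_integrable_def V_free_def set_lebesgue_integral_def
          intro: integrable.intros dest: has_bochner_integral_integral_eq)
qed

theorem corollary4:
  fixes L :: "real \<Rightarrow> complex"
  assumes L_cont: "continuous_on UNIV L"
    and L_0: "L 0 = 0"
    and L_log: "\<And>s. exp (L s) = complex_of_real (phiT s)"
  shows "(\<forall>t>0.
            set_integrable lborel {0<..} (\<lambda>s. cnj (L s) * complex_of_real (exp (- (t * s)))) \<and>
            V_free L t = \<i> * complex_of_real (t * (ln (t / 2) - betaF (t / 2) - Digamma (t / 2))) \<and>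
            V_free L t = \<i> * complex_of_real (t * (ln (t / 4) - Digamma (t / 4 + 1 / 2))))
       \<and> (\<forall>s>0. 2 * Digamma (2 * s) - Digamma s - Digamma (s + 1 / 2) = 2 * ln (2::real))"
proof (intro conjI allI impI)
  fix t :: real assume t: "t > 0"
  have L_eq: "L = (\<lambda>s. complex_of_real (ln (phiT s)))"
    using continuous_log_eq_ln[OF connected_UNIV L_cont, of 0 phiT] L_0 L_log phiT_pos by auto
  note V = V_free_real_exponent[OF has_bochner_integral_ln_phiT_times_exp[OF t]]
  show "set_integrable lborel {0<..} (\<lambda>s. cnj (L s) * complex_of_real (exp (- (t * s))))"
    using V(1) by (simp add: L_eq)
  show V_quarter: "V_free L t = \<i> * complex_of_real (t * (ln (t / 4) - Digamma (t / 4 + 1 / 2)))"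
    using V(2) t by (simp add: L_eq power2_eq_square)
  have "ln (t / 2) - betaF (t / 2) - Digamma (t / 2) = ln (t / 4) - Digamma (t / 4 + 1 / 2)"
    using ln_minus_betaF_minus_Digamma[of "t/2"] t by simp
  with V_quarter show "V_free L t = \<i> * complex_of_real (t * (ln (t / 2) - betaF (t / 2) - Digamma (t / 2)))"
    by simp
qed (rule Digamma_duplication_real)

end
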